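(* Let $n\ge 2$ and $d\ge1$ be integers and consider the test $\mathcal{T}_d$ described below. For every $i\in[n]$, the polynomial $f(x)=x_i-x_{n+i}^d$ on $\mathbb{R}^{2n}$ passes $\mathcal{T}_d$ with probability at least $1-\beta$, where $\beta=1/\log n$.
   Context: The test $\mathcal{T}_d$ takes as input a degree-$d$ real polynomial $f:\mathbb{R}^{2n}\to\mathbb{R}$. Set $\beta:=1/\log n$ and $\delta:=2^{-n^2}$. Generate $n$ i.i.d. bits $a_i\in\{0,1\}$ with $\Pr[a_i=1]=\beta$, $2n$ i.i.d. standard Gaussians $h_1,\dots,h_n,g_1,\dots,g_n\sim N(0,1)$, and a uniformly random $b\in\{-1,1\}$, all independent. Set $y\in\mathbb{R}^{2n}$ by $y_i=a_ih_i+g_i^d+b\delta$ and $y_{n+i}=g_i$ for $i\in[n]$. The test accepts (f passes) iff $\mathrm{sign}(f(y))=b$. *)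

theory Defs
  imports "HOL-Probability.Probability"
begin

definition test_beta :: "nat \<Rightarrow> real" where
  "test_beta n = 1 / log 2 (real n)"

definition test_delta :: "nat \<Rightarrow> real" where
  "test_delta n = 1 / 2 ^ (n^2)"

definition std_gauss :: "real measure" where
  "std_gauss = density lborel std_normal_density"

text \<open>Sample space: bits a_0..a_{n-1}, Gaussians h_0..h_{n-1}, g_0..g_{n-1}, sign b.
  Indices are 0-based: i ranges over {0..<n}, coordinates of y over {0..<2n}.\<close>
definition test_space :: "nat \<Rightarrow> ((nat \<Rightarrow> bool) \<times> (nat \<Rightarrow> real) \<times> (nat \<Rightarrow> real) \<times> real) measure" where
  "test_space n =
     (PiM {..<n} (\<lambda>_. measure_pmf (bernoulli_pmf (test_beta n)))) \<Otimes>\<^sub>M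
     ((PiM {..<n} (\<lambda>_. std_gauss)) \<Otimes>\<^sub>M
     ((PiM {..<n} (\<lambda>_. std_gauss)) \<Otimes>\<^sub>M
      measure_pmf (pmf_of_set {-1, 1::real})))"

definition test_point :: "nat \<Rightarrow> nat \<Rightarrow> (nat \<Rightarrow> bool) \<Rightarrow> (nat \<Rightarrow> real) \<Rightarrow> (nat \<Rightarrow> real) \<Rightarrow> real \<Rightarrow> (nat \<Rightarrow> real)" where
  "test_point n d a h g b = (\<lambda>j.
     if j < n then (if a j then h j else 0) + g j ^ d + b * test_delta n
     else if j < 2 * n then g (j - n) else 0)"

definition pass_prob :: "nat \<Rightarrow> nat \<Rightarrow> ((nat \<Rightarrow> real) \<Rightarrow> real) \<Rightarrow> real" where
  "pass_prob n d f = measure (test_space n)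
     {(a, h, g, b) \<in> space (test_space n). sgn (f (test_point n d a h g b)) = b}"

end

theory Submission
  imports Defs
begin

text \<open>At coordinate i the query point gives y_i - y_{n+i}^d = a_i h_i + b\<delta>, so whenever the
  bit a_i is off (probability 1 - \<beta>) the value is b\<delta>, whose sign is b.\<close>

lemma prob_space_std_gauss: "prob_space std_gauss"
  unfolding std_gauss_def by (rule prob_space_normal_density) simp

lemma sets_std_gauss: "sets std_gauss = sets borel"
  unfolding std_gauss_def by simp

lemma test_beta_bounds:
  assumes "n \<ge> 2"
  shows "0 \<le> test_beta n" "test_beta n \<le> 1"
proof -
  have "log 2 (real n) \<ge> 1" using assms by simp
  then show "0 \<le> test_beta n" "test_beta n \<le> 1" unfolding test_beta_def by auto
qed

lemma sgn_mult_unit_sign: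
  fixes b \<delta> :: real
  assumes "b \<in> {-1, 1}" "\<delta> > 0"
  shows "sgn (b * \<delta>) = b"
  using assms by (auto simp: sgn_mult)

lemma test_point_diff:
  assumes "i < n"
  shows "test_point n d a h g b i - test_point n d a h g b (n + i) ^ d
           = (if a i then h i else 0) + b * test_delta n"
  using assms by (simp add: test_point_def)

lemma emeasure_PiM_bernoulli_off:
  assumes "i \<in> I" "finite I" "0 \<le> p" "p \<le> 1"
  shows "emeasure (PiM I (\<lambda>_. measure_pmf (bernoulli_pmf p)))
           {a \<in> space (PiM I (\<lambda>_. measure_pmf (bernoulli_pmf p))). \<not> a i} = ennreal (1 - p)"
proof -
  interpret product_prob_space "\<lambda>_. measure_pmf (bernoulli_pmf p)" I by unfold_locales
  have "{a \<in> space (PiM I (\<lambda>_. measure_pmf (bernoulli_pmf p))). \<not> a i}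
      = {a \<in> space (PiM I (\<lambda>_. measure_pmf (bernoulli_pmf p))). a i \<in> {False}}" by auto
  also have "emeasure (PiM I (\<lambda>_. measure_pmf (bernoulli_pmf p))) \<dots> = ennreal (1 - p)"
    using assms by (subst emeasure_PiM_Collect_single) (auto simp: emeasure_pmf_single)
  finally show ?thesis .
qed

lemma measure_test_space_bit_off:
  assumes "n \<ge> 2" "i < n"
  shows "measure (test_space n)
           {x \<in> space (test_space n). \<not> fst x i \<and> snd (snd (snd x)) \<in> {-1, 1}} = 1 - test_beta n"
proof -
  define B where "B = PiM {..<n} (\<lambda>_. measure_pmf (bernoulli_pmf (test_beta n)))"
  define G where "G = PiM {..<n} (\<lambda>_. std_gauss)"
  define U where "U = measure_pmf (pmf_of_set {-1, 1::real})"
  interpret G: prob_space G unfolding G_def by (intro prob_space_PiM prob_space_std_gauss)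
  interpret U: prob_space U unfolding U_def by (rule prob_space_measure_pmf)
  interpret GU: prob_space "G \<Otimes>\<^sub>M U" by (intro prob_space_pair) unfold_locales
  interpret GGU: prob_space "G \<Otimes>\<^sub>M (G \<Otimes>\<^sub>M U)" by (intro prob_space_pair) unfold_locales
  define A where "A = {a \<in> space B. \<not> a i}"
  have A_sets: "A \<in> sets B"
  proof -
    have "A = (\<lambda>a. a i) -` {False} \<inter> space B" unfolding A_def by auto
    then show ?thesis unfolding B_def
      using assms(2) by (auto intro: measurable_sets[OF measurable_component_singleton])
  qed
  have sets_U: "sets U = UNIV" unfolding U_def by simp
  have "emeasure U {-1, 1} = 1" unfolding U_def by (rule emeasure_pmf_of_set_space) auto
  then have "emeasure (G \<Otimes>\<^sub>M (G \<Otimes>\<^sub>M U)) (space G \<times> (space G \<times> {-1, 1})) = 1"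
    by (simp add: U.emeasure_pair_measure_Times GU.emeasure_pair_measure_Times
        G.emeasure_space_1 sets_U)
  moreover have "emeasure B A = ennreal (1 - test_beta n)"
    unfolding A_def B_def
    using assms test_beta_bounds[OF assms(1)] by (intro emeasure_PiM_bernoulli_off) auto
  ultimately have "emeasure (test_space n) (A \<times> (space G \<times> (space G \<times> {-1, 1})))
      = ennreal (1 - test_beta n)"
    unfolding test_space_def B_def[symmetric] G_def[symmetric] U_def[symmetric]
    using A_sets by (simp add: GGU.emeasure_pair_measure_Times sets_U)
  moreover have "A \<times> (space G \<times> (space G \<times> {-1, 1}))
      = {x \<in> space (test_space n). \<not> fst x i \<and> snd (snd (snd x)) \<in> {-1, 1}}"
    unfolding test_space_def B_def[symmetric] G_def[symmetric] U_def[symmetric] A_def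
    by (auto simp: space_pair_measure U_def)
  ultimately show ?thesis
    using test_beta_bounds[OF assms(1)] by (simp add: measure_def)
qed

lemma sets_test_space_sign_event:
  assumes "i < n"
  shows "{x \<in> space (test_space n). sgn ((if fst x i then fst (snd x) i else 0)
            + snd (snd (snd x)) * test_delta n) = snd (snd (snd x))} \<in> sets (test_space n)"
proof (rule measurable_equality_set)
  have "(\<lambda>x. snd (snd (snd x))) \<in> test_space n \<rightarrow>\<^sub>M count_space UNIV"
    unfolding test_space_def by measurable
  then show sign_meas: "(\<lambda>x. snd (snd (snd x))) \<in> borel_measurable (test_space n)"
    by (rule measurable_compose) simp
  have "(\<lambda>x. fst (snd x) i) \<in> test_space n \<rightarrow>\<^sub>M std_gauss"
    unfolding test_space_def using assms by (measurable; simp)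
  then have "(\<lambda>x. fst (snd x) i) \<in> borel_measurable (test_space n)"
    using measurable_cong_sets[OF refl sets_std_gauss] by blast
  moreover have "Measurable.pred (test_space n) (\<lambda>x. fst x i)"
    unfolding test_space_def using assms by (measurable; simp)
  ultimately show "(\<lambda>x. sgn ((if fst x i then fst (snd x) i else 0)
      + snd (snd (snd x)) * test_delta n)) \<in> borel_measurable (test_space n)"
    using sign_meas by measurable
qed

theorem mainTheorem3:
  fixes n d i :: nat
  assumes "n \<ge> 2" and "d \<ge> 1" and "i < n"
  shows "pass_prob n d (\<lambda>y. y i - y (n + i) ^ d) \<ge> 1 - test_beta n"
proof -
  interpret prob_space "test_space n"
    unfolding test_space_def
    by (intro prob_space_pair prob_space_PiM prob_space_measure_pmf prob_space_std_gauss)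
  let ?pass = "{x \<in> space (test_space n). sgn ((if fst x i then fst (snd x) i else 0)
                 + snd (snd (snd x)) * test_delta n) = snd (snd (snd x))}"
  let ?good = "{x \<in> space (test_space n). \<not> fst x i \<and> snd (snd (snd x)) \<in> {-1, 1}}"
  have "?good \<subseteq> ?pass"
    by (auto simp: sgn_mult_unit_sign test_delta_def)
  then have "measure (test_space n) ?good \<le> measure (test_space n) ?pass"
    using sets_test_space_sign_event[OF assms(3)] by (rule finite_measure_mono)
  then have "1 - test_beta n \<le> measure (test_space n) ?pass"
    by (simp only: measure_test_space_bit_off[OF assms(1,3)])
  also have "?pass = {(a, h, g, b) \<in> space (test_space n).
      sgn (test_point n d a h g b i - test_point n d a h g b (n + i) ^ d) = b}"
    using assms(3) by (auto simp: test_point_diff)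
  finally show ?thesis unfolding pass_prob_def by simp
qed

end
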